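(* If $\mathscr{S}$ is a relaxed scenario, then $G_{=}(\mathscr{S})$ does not contain an induced path on six vertices.
   Context: All trees are planted phylogenetic trees: a tree $T$ has a distinguished vertex $0_T$ of degree $1$ whose unique neighbor $\rho_T$ is the root, and every vertex other than $0_T$ and the leaves $L(T)$ has at least two children. For $x,y\in V(T)$ write $y\preceq_T x$ if $x$ lies on the path from $0_T$ to $y$; edges are written $uv$ with $v\prec_T u$. $\mathrm{lca}_T$ denotes the last common ancestor. A time map for $T$ is $\tau_T\colon V(T)\to\mathbb{R}$ with $\tau_T(x)<\tau_T(y)$ whenever $x\prec_T y$. A relaxed scenario $\mathscr{S}=(T,S,\sigma,\mu,\tau_T,\tau_S)$ consists of a gene tree $T$ with time map $\tau_T$, a species tree $S$ with time map $\tau_S$, a map $\sigma\colon L(T)\to M$ with $M\subseteq L(S)$, and a map $\mu\colon V(T)\to V(S)\cup E(S)$ such that (S0) $\mu(x)=0_S$ iff $x=0_T$; (S1) $\mu(x)\in L(S)$ iff $x\in L(T)$, in which case $\mu(x)=\sigma(x)$; (S2) if $\mu(x)\in V(S)$ then $\tau_S(\mu(x))=\tau_T(x)$; (S3) if $\mu(x)=uv\in E(S)$ then $\tau_S(v)<\tau_T(x)<\tau_S(u)$. The EDT graph $G_{=}(\mathscr{S})$ has vertex set $L(T)$ and an edge $xy$ ($x\ne y$) iff $\tau_T(\mathrm{lca}_T(x,y))=\tau_S(\mathrm{lca}_S(\sigma(x),\sigma(y)))$. *)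

theory Defs
  imports Complex_Main
begin

text \<open>A rooted tree is given by a vertex set V, a set E of directed edges (u,v)
  meaning v is a child of u, and the planting vertex z (playing the role of 0_T).\<close>

definition children :: "('v \<times> 'v) set \<Rightarrow> 'v \<Rightarrow> 'v set" where
  "children E u = {v. (u, v) \<in> E}"

text \<open>preceq E y x  means  y \<preceq>_T x, i.e. x lies on the path from 0_T to y.\<close>
definition preceq :: "('v \<times> 'v) set \<Rightarrow> 'v \<Rightarrow> 'v \<Rightarrow> bool" where
  "preceq E y x \<longleftrightarrow> (x, y) \<in> E\<^sup>*"

definition prec :: "('v \<times> 'v) set \<Rightarrow> 'v \<Rightarrow> 'v \<Rightarrow> bool" where
  "prec E y x \<longleftrightarrow> (x, y) \<in> E\<^sup>+"

definition leaves :: "'v set \<Rightarrow> ('v \<times> 'v) set \<Rightarrow> 'v \<Rightarrow> 'v set" where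
  "leaves V E z = {v \<in> V. v \<noteq> z \<and> children E v = {}}"

definition planted_phylo_tree :: "'v set \<Rightarrow> ('v \<times> 'v) set \<Rightarrow> 'v \<Rightarrow> bool" where
  "planted_phylo_tree V E z \<longleftrightarrow>
     finite V \<and> E \<subseteq> V \<times> V \<and> z \<in> V \<and> acyclic E \<and>
     (\<forall>u. (u, z) \<notin> E) \<and> card (children E z) = 1 \<and>
     (\<forall>v \<in> V. v \<noteq> z \<longrightarrow> (\<exists>!u. (u, v) \<in> E)) \<and>
     (\<forall>v \<in> V. preceq E v z) \<and>
     (\<forall>v \<in> V. v \<noteq> z \<and> v \<notin> leaves V E z \<longrightarrow> card (children E v) \<ge> 2)"

definition lca :: "'v set \<Rightarrow> ('v \<times> 'v) set \<Rightarrow> 'v \<Rightarrow> 'v \<Rightarrow> 'v" where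
  "lca V E x y = (THE w. w \<in> V \<and> preceq E x w \<and> preceq E y w \<and>
       (\<forall>w' \<in> V. preceq E x w' \<and> preceq E y w' \<longrightarrow> preceq E w w'))"

definition time_map :: "'v set \<Rightarrow> ('v \<times> 'v) set \<Rightarrow> ('v \<Rightarrow> real) \<Rightarrow> bool" where
  "time_map V E \<tau> \<longleftrightarrow> (\<forall>x \<in> V. \<forall>y \<in> V. prec E x y \<longrightarrow> \<tau> x < \<tau> y)"

text \<open>The reconciliation map mu sends gene-tree vertices to species-tree vertices
  (Inl v) or species-tree edges (Inr (u,v)).\<close>

definition relaxed_scenario ::
  "'v set \<Rightarrow> ('v \<times> 'v) set \<Rightarrow> 'v \<Rightarrow>
   's set \<Rightarrow> ('s \<times> 's) set \<Rightarrow> 's \<Rightarrow>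
   ('v \<Rightarrow> 's) \<Rightarrow> 's set \<Rightarrow> ('v \<Rightarrow> 's + ('s \<times> 's)) \<Rightarrow>
   ('v \<Rightarrow> real) \<Rightarrow> ('s \<Rightarrow> real) \<Rightarrow> bool" where
  "relaxed_scenario VT ET zT VS ES zS \<sigma> M \<mu> \<tau>T \<tau>S \<longleftrightarrow>
     planted_phylo_tree VT ET zT \<and> planted_phylo_tree VS ES zS \<and>
     time_map VT ET \<tau>T \<and> time_map VS ES \<tau>S \<and>
     M \<subseteq> leaves VS ES zS \<and> \<sigma> ` leaves VT ET zT \<subseteq> M \<and>
     (\<forall>x \<in> VT. \<mu> x \<in> Inl ` VS \<union> Inr ` ES) \<and>
     (\<forall>x \<in> VT. \<mu> x = Inl zS \<longleftrightarrow> x = zT) \<and>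
     (\<forall>x \<in> VT. (\<mu> x \<in> Inl ` leaves VS ES zS \<longleftrightarrow> x \<in> leaves VT ET zT)) \<and>
     (\<forall>x \<in> leaves VT ET zT. \<mu> x = Inl (\<sigma> x)) \<and>
     (\<forall>x \<in> VT. \<forall>v. \<mu> x = Inl v \<longrightarrow> \<tau>S v = \<tau>T x) \<and>
     (\<forall>x \<in> VT. \<forall>u v. \<mu> x = Inr (u, v) \<longrightarrow> \<tau>S v < \<tau>T x \<and> \<tau>T x < \<tau>S u)"

text \<open>Adjacency in the EDT graph G_=(S); its vertex set is the leaf set of T.\<close>
definition edt_edge ::
  "'v set \<Rightarrow> ('v \<times> 'v) set \<Rightarrow> 's set \<Rightarrow> ('s \<times> 's) set \<Rightarrow>
   ('v \<Rightarrow> 's) \<Rightarrow> ('v \<Rightarrow> real) \<Rightarrow> ('s \<Rightarrow> real) \<Rightarrow> 'v \<Rightarrow> 'v \<Rightarrow> bool" where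
  "edt_edge VT ET VS ES \<sigma> \<tau>T \<tau>S x y \<longleftrightarrow>
     x \<noteq> y \<and> \<tau>T (lca VT ET x y) = \<tau>S (lca VS ES (\<sigma> x) (\<sigma> y))"

definition has_induced_path :: "'a set \<Rightarrow> ('a \<Rightarrow> 'a \<Rightarrow> bool) \<Rightarrow> nat \<Rightarrow> bool" where
  "has_induced_path X G k \<longleftrightarrow>
     (\<exists>xs. length xs = k \<and> distinct xs \<and> set xs \<subseteq> X \<and>
        (\<forall>i < k. \<forall>j < k. i \<noteq> j \<longrightarrow> (G (xs ! i) (xs ! j) \<longleftrightarrow> (i = Suc j \<or> j = Suc i))))"

end

theory Submission
  imports Defs
begin

text \<open>Dating last common ancestors turns both trees into ultrametrics on the leaves of T:
  f x y = \<tau>T (lca x y) and g x y = \<tau>S (lca (\<sigma> x) (\<sigma> y)), and G_= is the graph of pairs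
  on which f and g agree. Along an induced path x0, ..., x5 any two consecutive edges carry the
  same value, for otherwise f and g would both equal the larger one on the non-edge between
  their ends; so f and g take one value c on all five edges. By the strong triangle inequality
  both are at most c on every other pair and, as they differ there, one of them is below c.
  Being below c is transitive for an ultrametric, so the non-edges of the path would be covered
  by two transitive relations that avoid its edges, and already six vertices rule this out.\<close>

lemma planted_phylo_tree_parent_unique:
  assumes "planted_phylo_tree V E z" "(u, v) \<in> E" "(u', v) \<in> E"
  shows "u = u'"
proof -
  have "v \<in> V" "v \<noteq> z" using assms unfolding planted_phylo_tree_def by auto
  then show ?thesis using assms unfolding planted_phylo_tree_def by metis
qed

lemma ancestors_comparable:
  assumes P: "planted_phylo_tree V E z" and "(a, x) \<in> E\<^sup>*" "(b, x) \<in> E\<^sup>*"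
  shows "(a, b) \<in> E\<^sup>* \<or> (b, a) \<in> E\<^sup>*"
  using assms(2,3)
proof (induction arbitrary: b rule: rtrancl_induct)
  case base
  then show ?case by simp
next
  case (step y x')
  from \<open>(b, x') \<in> E\<^sup>*\<close> show ?case
  proof (cases rule: rtranclE)
    case base
    then show ?thesis using step.hyps by (meson rtrancl.rtrancl_into_rtrancl)
  next
    case (step y')
    with planted_phylo_tree_parent_unique[OF P] \<open>(y, x') \<in> E\<close> have "y' = y" by metis
    then show ?thesis using step.IH step by auto
  qed
qed

lemma ancestor_antisym:
  assumes "planted_phylo_tree V E z" "(a, b) \<in> E\<^sup>*" "(b, a) \<in> E\<^sup>*"
  shows "a = b"
proof (rule ccontr)
  assume "a \<noteq> b"
  then have "(a, a) \<in> E\<^sup>+"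
    using assms(2,3) by (meson rtranclD trancl_rtrancl_trancl)
  then show False using assms(1) unfolding planted_phylo_tree_def acyclic_def by blast
qed

definition is_lca :: "'v set \<Rightarrow> ('v \<times> 'v) set \<Rightarrow> 'v \<Rightarrow> 'v \<Rightarrow> 'v \<Rightarrow> bool" where
  "is_lca V E x y w \<longleftrightarrow> w \<in> V \<and> preceq E x w \<and> preceq E y w \<and>
     (\<forall>w' \<in> V. preceq E x w' \<and> preceq E y w' \<longrightarrow> preceq E w w')"

lemma is_lca_unique:
  assumes "planted_phylo_tree V E z" "is_lca V E x y w" "is_lca V E x y w'"
  shows "w = w'"
  using assms ancestor_antisym[OF assms(1)] unfolding is_lca_def preceq_def by blast

text \<open>A common ancestor none of whose children is a common ancestor lies below all others,
  because the ancestors of a vertex form a chain; it exists as the child relation is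
  well-founded.\<close>
lemma is_lca_exists:
  assumes P: "planted_phylo_tree V E z" and "x \<in> V" "y \<in> V"
  shows "\<exists>w. is_lca V E x y w"
proof -
  define A where "A = {w \<in> V. preceq E x w \<and> preceq E y w}"
  have "z \<in> A" using P assms unfolding A_def planted_phylo_tree_def by auto
  have EV: "E \<subseteq> V \<times> V" and "finite V" "acyclic E"
    using P unfolding planted_phylo_tree_def by auto
  then have "wf (E\<inverse>)" by (meson finite_SigmaI finite_acyclic_wf_converse finite_subset)
  then obtain m where "m \<in> A" and m_min: "\<And>c. (c, m) \<in> E\<inverse> \<Longrightarrow> c \<notin> A"
    using \<open>z \<in> A\<close> by (rule wfE_min) blast
  have "preceq E m w" if "w \<in> A" for w
  proof -
    have "(w, m) \<in> E\<^sup>* \<or> (m, w) \<in> E\<^sup>*"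
      using \<open>m \<in> A\<close> that ancestors_comparable[OF P] unfolding A_def preceq_def by blast
    moreover have "m = w" if "(m, w) \<in> E\<^sup>*"
      using that
    proof (cases rule: converse_rtranclE)
      case (step c)
      then have "c \<in> A"
        using EV \<open>w \<in> A\<close> unfolding A_def preceq_def by (auto intro: rtrancl_trans)
      then show ?thesis using m_min step by blast
    qed
    ultimately show ?thesis unfolding preceq_def by auto
  qed
  then have "is_lca V E x y m" using \<open>m \<in> A\<close> unfolding A_def is_lca_def by blast
  then show ?thesis ..
qed

lemma lca_is_lca:
  assumes "planted_phylo_tree V E z" "x \<in> V" "y \<in> V"
  shows "is_lca V E x y (lca V E x y)"
proof -
  have "\<exists>!w. is_lca V E x y w"
    using is_lca_exists[OF assms] is_lca_unique[OF assms(1)] by blast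
  then show ?thesis unfolding lca_def is_lca_def[symmetric] by (rule theI')
qed

lemma lca_commute: "lca V E x y = lca V E y x"
  unfolding lca_def by (rule arg_cong[where f = The]) auto

lemma time_map_mono:
  assumes "time_map V E \<tau>" "x \<in> V" "y \<in> V" "preceq E x y"
  shows "\<tau> x \<le> \<tau> y"
  using assms unfolding time_map_def prec_def preceq_def
  by (metis order.order_iff_strict rtranclD)

text \<open>No identity axiom: the motivating example \<tau> (lca x x) = \<tau> x is not zero on the diagonal.\<close>
definition ultrametric_on :: "'a set \<Rightarrow> ('a \<Rightarrow> 'a \<Rightarrow> 'b::linorder) \<Rightarrow> bool" where
  "ultrametric_on X f \<longleftrightarrow>
     (\<forall>p \<in> X. \<forall>q \<in> X. f p q = f q p) \<and>
     (\<forall>p \<in> X. \<forall>q \<in> X. \<forall>r \<in> X. f p r \<le> max (f p q) (f q r))"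

lemma ultrametric_on_commute:
  "ultrametric_on X f \<Longrightarrow> p \<in> X \<Longrightarrow> q \<in> X \<Longrightarrow> f p q = f q p"
  unfolding ultrametric_on_def by blast

lemma ultrametric_on_max:
  "ultrametric_on X f \<Longrightarrow> p \<in> X \<Longrightarrow> q \<in> X \<Longrightarrow> r \<in> X \<Longrightarrow> f p r \<le> max (f p q) (f q r)"
  unfolding ultrametric_on_def by blast

lemma ultrametric_on_less_trans:
  assumes "ultrametric_on X f" "p \<in> X" "q \<in> X" "r \<in> X" "f p q < c" "f q r < c"
  shows "f p r < c"
  using ultrametric_on_max[OF assms(1-4)] assms(5,6) by (meson le_less_trans max_less_iff_conj)

lemma ultrametric_on_subset: "ultrametric_on X f \<Longrightarrow> Y \<subseteq> X \<Longrightarrow> ultrametric_on Y f"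
  unfolding ultrametric_on_def by blast

lemma ultrametric_on_compose:
  "ultrametric_on Y f \<Longrightarrow> h ` X \<subseteq> Y \<Longrightarrow> ultrametric_on X (\<lambda>p q. f (h p) (h q))"
  unfolding ultrametric_on_def by (simp add: image_subset_iff)

lemma ultrametric_on_time_lca:
  assumes P: "planted_phylo_tree V E z" and T: "time_map V E \<tau>"
  shows "ultrametric_on V (\<lambda>x y. \<tau> (lca V E x y))"
  unfolding ultrametric_on_def
proof (intro conjI ballI)
  fix x y w assume "x \<in> V" "y \<in> V" "w \<in> V"
  show "\<tau> (lca V E x y) = \<tau> (lca V E y x)" by (simp add: lca_commute)
  let ?u = "lca V E x y" and ?v = "lca V E y w"
  have u: "is_lca V E x y ?u" and v: "is_lca V E y w ?v" and xw: "is_lca V E x w (lca V E x w)"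
    using lca_is_lca[OF P] \<open>x \<in> V\<close> \<open>y \<in> V\<close> \<open>w \<in> V\<close> by blast+
  \<comment> \<open>both lie above y, so the higher of them lies above x and w\<close>
  have "(?u, ?v) \<in> E\<^sup>* \<or> (?v, ?u) \<in> E\<^sup>*"
    using u v ancestors_comparable[OF P] unfolding is_lca_def preceq_def by blast
  then obtain h where "h \<in> {?u, ?v}" "preceq E x h" "preceq E w h"
    using u v unfolding is_lca_def preceq_def by (blast intro: rtrancl_trans)
  moreover have "h \<in> V" using \<open>h \<in> {?u, ?v}\<close> u v unfolding is_lca_def by blast
  ultimately have "preceq E (lca V E x w) h" using xw unfolding is_lca_def by blast
  then have "\<tau> (lca V E x w) \<le> \<tau> h"
    using time_map_mono[OF T] xw \<open>h \<in> V\<close> unfolding is_lca_def by blast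
  then show "\<tau> (lca V E x w) \<le> max (\<tau> ?u) (\<tau> ?v)" using \<open>h \<in> {?u, ?v}\<close> by auto
qed

lemma ultrametric_isosceles:
  assumes "ultrametric_on X f" "p \<in> X" "q \<in> X" "r \<in> X" "f p q \<noteq> f q r"
  shows "f p r = max (f p q) (f q r)"
proof -
  have "f p r \<le> max (f p q) (f q r)" "f p q \<le> max (f q r) (f p r)" "f q r \<le> max (f p q) (f p r)"
    using ultrametric_on_commute[OF assms(1)] ultrametric_on_max[OF assms(1)] assms(2-4) by metis+
  then show ?thesis using assms(5) by (auto simp: max_def split: if_splits)
qed

lemma ultrametric_chain_le:
  assumes "ultrametric_on X f" "\<And>k. x k \<in> X"
    and "\<And>k. i \<le> k \<Longrightarrow> k < j \<Longrightarrow> f (x k) (x (Suc k)) \<le> c" "i < j"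
  shows "f (x i) (x j) \<le> c"
  using assms(3,4)
proof (induction j)
  case (Suc j)
  have last: "f (x j) (x (Suc j)) \<le> c" using Suc.prems by simp
  show ?case
  proof (cases "i = j")
    case False
    then have "f (x i) (x j) \<le> c" using Suc.IH Suc.prems by simp
    moreover have "f (x i) (x (Suc j)) \<le> max (f (x i) (x j)) (f (x j) (x (Suc j)))"
      by (rule ultrametric_on_max[OF assms(1,2,2,2)])
    ultimately show ?thesis using last by (meson max.bounded_iff order.trans)
  qed (use last in simp)
qed simp

text \<open>Otherwise both ultrametrics take the larger of the two values on a, c.\<close>
lemma agreement_path_values_eq:
  assumes f: "ultrametric_on X f" and g: "ultrametric_on X g" and "a \<in> X" "b \<in> X" "c \<in> X"
    and "f a b = g a b" "f b c = g b c" "f a c \<noteq> g a c"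
  shows "f a b = f b c"
proof (rule ccontr)
  assume "f a b \<noteq> f b c"
  moreover from this have "g a b \<noteq> g b c" using assms(6,7) by simp
  ultimately have "f a c = max (f a b) (f b c)" "g a c = max (g a b) (g b c)"
    using ultrametric_isosceles[OF f] ultrametric_isosceles[OF g] assms(3-5) by blast+
  then show False using assms(6-8) by simp
qed

lemma no_two_transitive_cover_path6_non_edges_0_2:
  fixes R S :: "nat \<Rightarrow> nat \<Rightarrow> bool"
  assumes sym: "\<And>i j. R i j \<Longrightarrow> R j i" "\<And>i j. S i j \<Longrightarrow> S j i"
    and trans: "\<And>i j k. R i j \<Longrightarrow> R j k \<Longrightarrow> R i k" "\<And>i j k. S i j \<Longrightarrow> S j k \<Longrightarrow> S i k"
    and path: "\<And>i. \<not> R i (Suc i)" "\<And>i. \<not> S i (Suc i)"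
    and cover: "\<And>i j. Suc i < j \<Longrightarrow> j < 6 \<Longrightarrow> R i j \<or> S i j"
    and "R 0 2"
  shows False
proof -
  have "\<not> R 2 3" "\<not> R 4 5" "\<not> S 2 3" "\<not> S 3 4"
    using path(1)[of 2] path(1)[of 4] path(2)[of 2] path(2)[of 3] by simp_all
  have "R 0 3 \<or> S 0 3" "R 0 4 \<or> S 0 4" "R 0 5 \<or> S 0 5" "R 2 5 \<or> S 2 5"
    using cover[of 0 3] cover[of 0 4] cover[of 0 5] cover[of 2 5] by simp_all
  have "S 0 3"
    using \<open>R 0 3 \<or> S 0 3\<close> trans(1)[OF sym(1)[OF \<open>R 0 2\<close>]] \<open>\<not> R 2 3\<close> by blast
  have "R 0 4"
    using \<open>R 0 4 \<or> S 0 4\<close> trans(2)[OF sym(2)[OF \<open>S 0 3\<close>]] \<open>\<not> S 3 4\<close> by blast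
  have "S 0 5"
    using \<open>R 0 5 \<or> S 0 5\<close> trans(1)[OF sym(1)[OF \<open>R 0 4\<close>]] \<open>\<not> R 4 5\<close> by blast
  have "\<not> R 2 5"
    using trans(1)[OF trans(1)[OF sym(1)[OF \<open>R 0 4\<close>] \<open>R 0 2\<close>]] \<open>\<not> R 4 5\<close> by blast
  moreover have "\<not> S 2 5"
    using trans(2)[OF trans(2)[OF _ sym(2)[OF \<open>S 0 5\<close>]] \<open>S 0 3\<close>] \<open>\<not> S 2 3\<close> by blast
  ultimately show False using \<open>R 2 5 \<or> S 2 5\<close> by blast
qed

lemma no_two_transitive_cover_path6_non_edges:
  fixes R S :: "nat \<Rightarrow> nat \<Rightarrow> bool"
  assumes "\<And>i j. R i j \<Longrightarrow> R j i" "\<And>i j. S i j \<Longrightarrow> S j i"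
    and "\<And>i j k. R i j \<Longrightarrow> R j k \<Longrightarrow> R i k" "\<And>i j k. S i j \<Longrightarrow> S j k \<Longrightarrow> S i k"
    and "\<And>i. \<not> R i (Suc i)" "\<And>i. \<not> S i (Suc i)"
    and cover: "\<And>i j. Suc i < j \<Longrightarrow> j < 6 \<Longrightarrow> R i j \<or> S i j"
  shows False
proof -
  have "R 0 2 \<or> S 0 2" using cover[of 0 2] by simp
  then show False
  proof
    assume "R 0 2"
    from no_two_transitive_cover_path6_non_edges_0_2[of R S, OF assms this] show False .
  next
    assume "S 0 2"
    have "S i j \<or> R i j" if "Suc i < j" "j < 6" for i j using cover[OF that] by blast
    from no_two_transitive_cover_path6_non_edges_0_2[of S R, OF assms(2,1,4,3,6,5) this \<open>S 0 2\<close>]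
    show False .
  qed
qed

lemma induced_path6_agreement_graphE:
  assumes "has_induced_path X (\<lambda>p q. p \<noteq> q \<and> f p q = g p q) 6"
  obtains x :: "nat \<Rightarrow> 'a" where "\<And>k. x k \<in> X"
    and "\<And>i. i < 5 \<Longrightarrow> f (x i) (x (Suc i)) = g (x i) (x (Suc i))"
    and "\<And>i j. Suc i < j \<Longrightarrow> j < 6 \<Longrightarrow> f (x i) (x j) \<noteq> g (x i) (x j)"
proof -
  obtain xs where len: "length xs = 6" and "distinct xs" and "set xs \<subseteq> X"
    and induced: "\<forall>i < 6. \<forall>j < 6. i \<noteq> j \<longrightarrow>
        ((xs ! i \<noteq> xs ! j \<and> f (xs ! i) (xs ! j) = g (xs ! i) (xs ! j)) \<longleftrightarrow> (i = Suc j \<or> j = Suc i))"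
    using assms unfolding has_induced_path_def by blast
  \<comment> \<open>clamped so that the sequence stays in X beyond the path\<close>
  define x where "x i = xs ! min i 5" for i
  show thesis
  proof (rule that)
    show "x k \<in> X" for k
      using \<open>set xs \<subseteq> X\<close> len unfolding x_def by (auto intro: nth_mem)
    show "f (x i) (x (Suc i)) = g (x i) (x (Suc i))" if "i < 5" for i
      using that induced[rule_format, of i "Suc i"] unfolding x_def by simp
    show "f (x i) (x j) \<noteq> g (x i) (x j)" if "Suc i < j" "j < 6" for i j
      using that induced[rule_format, of i j] \<open>distinct xs\<close> len
      unfolding x_def by (simp add: nth_eq_iff_index_eq)
  qed
qed

lemma no_induced_path6_in_agreement_graph:
  assumes f: "ultrametric_on X f" and g: "ultrametric_on X g"
  shows "\<not> has_induced_path X (\<lambda>p q. p \<noteq> q \<and> f p q = g p q) 6"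
proof
  assume "has_induced_path X (\<lambda>p q. p \<noteq> q \<and> f p q = g p q) 6"
  then obtain x where inX: "\<And>k. x k \<in> X"
    and edge: "\<And>i. i < 5 \<Longrightarrow> f (x i) (x (Suc i)) = g (x i) (x (Suc i))"
    and non_edge: "\<And>i j. Suc i < j \<Longrightarrow> j < 6 \<Longrightarrow> f (x i) (x j) \<noteq> g (x i) (x j)"
    by (rule induced_path6_agreement_graphE) blast
  define c where "c = f (x 0) (x 1)"
  have const: "f (x i) (x (Suc i)) = c" if "i < 5" for i
    using that
  proof (induction i)
    case (Suc i)
    then show ?case
      using agreement_path_values_eq[OF f g inX inX inX edge edge non_edge] by simp
  qed (simp add: c_def)
  have le_c: "f (x i) (x j) \<le> c" "g (x i) (x j) \<le> c" if "i < j" "j < 6" for i j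
  proof -
    have "f (x k) (x (Suc k)) \<le> c" "g (x k) (x (Suc k)) \<le> c" if "k < j" for k
      using const[of k] edge[of k] that \<open>j < 6\<close> by simp_all
    then show "f (x i) (x j) \<le> c" "g (x i) (x j) \<le> c"
      using ultrametric_chain_le[where x = x, OF f inX] ultrametric_chain_le[where x = x, OF g inX]
        \<open>i < j\<close> by simp_all
  qed
  define R where "R i j \<longleftrightarrow> i < 6 \<and> j < 6 \<and> f (x i) (x j) < c" for i j
  define S where "S i j \<longleftrightarrow> i < 6 \<and> j < 6 \<and> g (x i) (x j) < c" for i j
  show False
  proof (rule no_two_transitive_cover_path6_non_edges[of R S])
    show "R j i" if "R i j" for i j
      using that ultrametric_on_commute[OF f inX[of i] inX[of j]] unfolding R_def by simp
    show "S j i" if "S i j" for i j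
      using that ultrametric_on_commute[OF g inX[of i] inX[of j]] unfolding S_def by simp
    show "R i k" if "R i j" "R j k" for i j k
      using that ultrametric_on_less_trans[OF f inX[of i] inX[of j] inX[of k]] unfolding R_def by blast
    show "S i k" if "S i j" "S j k" for i j k
      using that ultrametric_on_less_trans[OF g inX[of i] inX[of j] inX[of k]] unfolding S_def by blast
    show "\<not> R i (Suc i)" for i using const unfolding R_def by simp
    show "\<not> S i (Suc i)" for i using const edge unfolding S_def by simp
    show "R i j \<or> S i j" if "Suc i < j" "j < 6" for i j
      using le_c[of i j] non_edge[of i j] that unfolding R_def S_def by (auto simp: order.strict_iff_order)
  qed
qed

theorem lemma22:
  fixes VT :: "'v set" and ET :: "('v \<times> 'v) set" and zT :: 'v
    and VS :: "'s set" and ES :: "('s \<times> 's) set" and zS :: 's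
    and \<sigma> :: "'v \<Rightarrow> 's" and M :: "'s set" and \<mu> :: "'v \<Rightarrow> 's + ('s \<times> 's)"
    and \<tau>T :: "'v \<Rightarrow> real" and \<tau>S :: "'s \<Rightarrow> real"
  assumes "relaxed_scenario VT ET zT VS ES zS \<sigma> M \<mu> \<tau>T \<tau>S"
  shows "\<not> has_induced_path (leaves VT ET zT) (edt_edge VT ET VS ES \<sigma> \<tau>T \<tau>S) 6"
proof -
  let ?f = "\<lambda>x y. \<tau>T (lca VT ET x y)" and ?g = "\<lambda>x y. \<tau>S (lca VS ES (\<sigma> x) (\<sigma> y))"
  have T: "planted_phylo_tree VT ET zT" "time_map VT ET \<tau>T"
    and S: "planted_phylo_tree VS ES zS" "time_map VS ES \<tau>S"
    and leaves_in: "leaves VT ET zT \<subseteq> VT" "\<sigma> ` leaves VT ET zT \<subseteq> VS"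
    using assms unfolding relaxed_scenario_def leaves_def by auto
  have "ultrametric_on (leaves VT ET zT) ?f"
    using ultrametric_on_subset[OF ultrametric_on_time_lca[OF T] leaves_in(1)] .
  moreover have "ultrametric_on (leaves VT ET zT) ?g"
    using ultrametric_on_compose[OF ultrametric_on_time_lca[OF S] leaves_in(2)] .
  ultimately have "\<not> has_induced_path (leaves VT ET zT) (\<lambda>p q. p \<noteq> q \<and> ?f p q = ?g p q) 6"
    by (rule no_induced_path6_in_agreement_graph)
  moreover have "edt_edge VT ET VS ES \<sigma> \<tau>T \<tau>S = (\<lambda>p q. p \<noteq> q \<and> ?f p q = ?g p q)"
    unfolding edt_edge_def by blast
  ultimately show ?thesis by simp
qed

end
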